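(* Let $n\geq 3$, let $\alpha\in(1/2,1]$, and let $A$ and $B$ be two $n\times n$ generalized tournament matrices that are both $\alpha$-linear. Then there exists a clan $X$ of $A$ such that $\mathrm{Inv}(A,X)$ and $B$ have a common nontrivial clan.
   Context: A generalized tournament matrix of order $n$ is a real $n\times n$ matrix $M=(m_{ij})$ with nonnegative entries satisfying $M+M^{t}=J_n-I_n$. Write $[n]=\{1,\ldots,n\}$. A clan of $M$ is a subset $X\subseteq[n]$ such that for all $i,j\in X$ and $k\in[n]\setminus X$, $m_{ik}=m_{jk}$ and $m_{ki}=m_{kj}$; the empty set, singletons and $[n]$ are trivial clans. For $X\subseteq[n]$, $\mathrm{Inv}(M,X)$ is obtained from $M$ by replacing $m_{ij}$ by $m_{ji}$ for all $i,j\in X$. For $\alpha>1/2$, $M$ is $\alpha$-linear if there is an ordering $x_1,\ldots,x_n$ of $[n]$ such that $m_{x_ix_j}=\alpha$ whenever $i<j$. *)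

theory Defs
  imports Complex_Main
begin

(* An n x n real matrix is represented as  M :: nat => nat => real,  with
   indices ranging over {0..<n} (the paper's [n] = {1..n}, shifted by one).
   Entries outside {0..<n} x {0..<n} are irrelevant. *)

definition gen_tournament :: "nat \<Rightarrow> (nat \<Rightarrow> nat \<Rightarrow> real) \<Rightarrow> bool" where
  "gen_tournament n M \<longleftrightarrow>
     (\<forall>i<n. \<forall>j<n. M i j \<ge> 0) \<and>
     (\<forall>i<n. \<forall>j<n. M i j + M j i = (if i = j then 0 else 1))"

definition clan :: "nat \<Rightarrow> (nat \<Rightarrow> nat \<Rightarrow> real) \<Rightarrow> nat set \<Rightarrow> bool" where
  "clan n M X \<longleftrightarrow> X \<subseteq> {0..<n} \<and>
     (\<forall>i\<in>X. \<forall>j\<in>X. \<forall>k\<in>{0..<n} - X. M i k = M j k \<and> M k i = M k j)"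

definition trivial_clan :: "nat \<Rightarrow> nat set \<Rightarrow> bool" where
  "trivial_clan n X \<longleftrightarrow> X = {} \<or> card X = 1 \<or> X = {0..<n}"

definition Inv :: "(nat \<Rightarrow> nat \<Rightarrow> real) \<Rightarrow> nat set \<Rightarrow> (nat \<Rightarrow> nat \<Rightarrow> real)" where
  "Inv M X = (\<lambda>i j. if i \<in> X \<and> j \<in> X then M j i else M i j)"

definition alpha_linear :: "nat \<Rightarrow> real \<Rightarrow> (nat \<Rightarrow> nat \<Rightarrow> real) \<Rightarrow> bool" where
  "alpha_linear n \<alpha> M \<longleftrightarrow>
     (\<exists>x. bij_betw x {0..<n} {0..<n} \<and> (\<forall>i<n. \<forall>j<n. i < j \<longrightarrow> M (x i) (x j) = \<alpha>))"

end

theory Submission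
  imports Defs
begin

text \<open>An \<open>\<alpha>\<close>-linear matrix is determined by its ordering, and every interval of the
  ordering is a clan. Inverting an interval of the ordering again gives an \<open>\<alpha>\<close>-linear matrix,
  whose ordering is the old one with that interval reversed. Let \<open>u, v\<close> be the first two
  vertices of the ordering of \<open>B\<close>, so \<open>{u, v}\<close> is a nontrivial clan of \<open>B\<close>, and let them sit
  at positions \<open>p < q\<close> of the ordering of \<open>A\<close>. Inverting the interval \<open>(p, q]\<close> of \<open>A\<close> moves
  the vertex at position \<open>q\<close> to position \<open>p + 1\<close>, so \<open>{u, v}\<close> becomes an interval, hence a
  clan, of the inverted matrix.\<close>

definition linear_by :: "nat \<Rightarrow> real \<Rightarrow> (nat \<Rightarrow> nat \<Rightarrow> real) \<Rightarrow> (nat \<Rightarrow> nat) \<Rightarrow> bool" where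
  "linear_by n \<alpha> M x \<longleftrightarrow>
     bij_betw x {0..<n} {0..<n} \<and> (\<forall>i<n. \<forall>j<n. i < j \<longrightarrow> M (x i) (x j) = \<alpha>)"

lemma alpha_linear_iff_linear_by: "alpha_linear n \<alpha> M \<longleftrightarrow> (\<exists>x. linear_by n \<alpha> M x)"
  unfolding alpha_linear_def linear_by_def ..

lemma linear_by_inj:
  assumes "linear_by n \<alpha> M x" "i < n" "j < n"
  shows "x i = x j \<longleftrightarrow> i = j"
  using assms unfolding linear_by_def bij_betw_def inj_on_def by auto

lemma linear_by_less:
  assumes "linear_by n \<alpha> M x" "i < n"
  shows "x i < n"
  using assms unfolding linear_by_def by (auto dest: bij_betwE)

lemma linear_by_obtain_index:
  assumes "linear_by n \<alpha> M x" "k < n"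
  obtains i where "i < n" "k = x i"
  using assms unfolding linear_by_def bij_betw_def by (metis atLeastLessThan_iff imageE le0)

lemma linear_by_entry:
  assumes "gen_tournament n M" "linear_by n \<alpha> M x" "i < n" "j < n"
  shows "M (x i) (x j) = (if i < j then \<alpha> else if i = j then 0 else 1 - \<alpha>)"
proof -
  have sum: "M (x i) (x j) + M (x j) (x i) = (if i = j then 0 else 1)"
    using assms linear_by_less[OF assms(2)] linear_by_inj[OF assms(2)]
    unfolding gen_tournament_def by metis
  consider "i < j" | "i = j" | "j < i" by linarith
  then show ?thesis
  proof cases
    case 3
    then have "M (x j) (x i) = \<alpha>" using assms(2-4) unfolding linear_by_def by blast
    with 3 sum show ?thesis by auto
  qed (use assms(2-4) sum in \<open>auto simp: linear_by_def\<close>)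
qed

lemma linear_by_interval_clan:
  assumes "gen_tournament n M" "linear_by n \<alpha> M x" "b < n"
  shows "clan n M (x ` {a..b})"
  unfolding clan_def
proof (intro conjI ballI)
  show "x ` {a..b} \<subseteq> {0..<n}" using assms(2,3) linear_by_less by fastforce
next
  fix i j k assume "i \<in> x ` {a..b}" "j \<in> x ` {a..b}" and k: "k \<in> {0..<n} - x ` {a..b}"
  then obtain i' j' where ij: "i' \<in> {a..b}" "j' \<in> {a..b}" "i = x i'" "j = x j'" by blast
  obtain k' where "k' < n" "k = x k'" using k linear_by_obtain_index[OF assms(2)] by auto
  moreover from this k have "k' < a \<or> b < k'" by auto
  ultimately show "M i k = M j k" "M k i = M k j"
    using ij assms(3) linear_by_entry[OF assms(1,2)] by auto
qed

lemma gen_tournament_Inv: "gen_tournament n M \<Longrightarrow> gen_tournament n (Inv M X)"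
  unfolding gen_tournament_def Inv_def by (simp add: add.commute)

definition reflect_interval :: "nat \<Rightarrow> nat \<Rightarrow> nat \<Rightarrow> nat" where
  "reflect_interval a b i = (if a \<le> i \<and> i \<le> b then a + b - i else i)"

lemma reflect_interval_involution: "reflect_interval a b (reflect_interval a b i) = i"
  unfolding reflect_interval_def by auto

lemma bij_betw_reflect_interval:
  assumes "b < n"
  shows "bij_betw (reflect_interval a b) {0..<n} {0..<n}"
  by (rule bij_betw_byWitness[where f' = "reflect_interval a b"])
    (use assms in \<open>auto simp: reflect_interval_involution reflect_interval_def\<close>)

lemma linear_by_Inv_interval:
  assumes "linear_by n \<alpha> M x" "b < n"
  shows "linear_by n \<alpha> (Inv M (x ` {a..b})) (x \<circ> reflect_interval a b)"
  unfolding linear_by_def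
proof (intro conjI allI impI)
  show "bij_betw (x \<circ> reflect_interval a b) {0..<n} {0..<n}"
    using assms bij_betw_reflect_interval bij_betw_trans unfolding linear_by_def by blast
next
  fix i j assume "i < n" "j < n" "i < j"
  let ?r = "reflect_interval a b"
  have r_less: "?r k < n" if "k < n" for k using that assms(2) by (auto simp: reflect_interval_def)
  have in_X: "x (?r k) \<in> x ` {a..b} \<longleftrightarrow> a \<le> k \<and> k \<le> b" if "k < n" for k
  proof -
    have "x (?r k) \<in> x ` {a..b} \<longleftrightarrow> ?r k \<in> {a..b}"
    proof
      assume "x (?r k) \<in> x ` {a..b}"
      then obtain m where "m \<in> {a..b}" "x (?r k) = x m" by blast
      moreover from this assms(2) have "m < n" by auto
      ultimately show "?r k \<in> {a..b}" using linear_by_inj[OF assms(1) r_less[OF that]] by metis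
    qed auto
    then show ?thesis by (auto simp: reflect_interval_def)
  qed
  have "?r i < ?r j" if "\<not> (a \<le> i \<and> i \<le> b \<and> a \<le> j \<and> j \<le> b)"
    using that \<open>i < j\<close> by (auto simp: reflect_interval_def)
  moreover have "?r j < ?r i" if "a \<le> i \<and> i \<le> b \<and> a \<le> j \<and> j \<le> b"
    using that \<open>i < j\<close> by (auto simp: reflect_interval_def)
  ultimately show "Inv M (x ` {a..b}) ((x \<circ> ?r) i) ((x \<circ> ?r) j) = \<alpha>"
    using assms(1) r_less \<open>i < n\<close> \<open>j < n\<close> in_X unfolding Inv_def linear_by_def by auto
qed

lemma card_two_not_trivial_clan:
  assumes "card Y = 2" "n \<ge> 3"
  shows "\<not> trivial_clan n Y"
  using assms unfolding trivial_clan_def by auto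

theorem proposition5p3:
  fixes n :: nat and \<alpha> :: real and A B :: "nat \<Rightarrow> nat \<Rightarrow> real"
  assumes "n \<ge> 3"
    and "1/2 < \<alpha>" and "\<alpha> \<le> 1"
    and "gen_tournament n A" and "gen_tournament n B"
    and "alpha_linear n \<alpha> A" and "alpha_linear n \<alpha> B"
  shows "\<exists>X. clan n A X \<and>
           (\<exists>Y. clan n (Inv A X) Y \<and> clan n B Y \<and> \<not> trivial_clan n Y)"
proof -
  obtain x y where x: "linear_by n \<alpha> A x" and y: "linear_by n \<alpha> B y"
    using assms(6,7) alpha_linear_iff_linear_by by metis
  have "y 0 < n" "y 1 < n" "y 0 \<noteq> y 1"
    using assms(1) linear_by_less[OF y] linear_by_inj[OF y, of 0 1] by auto
  then obtain p q where pq: "p < q" "q < n" "{y 0, y 1} = {x p, x q}"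
  proof -
    obtain i j where "i < n" "j < n" "y 0 = x i" "y 1 = x j"
      using linear_by_obtain_index[OF x] \<open>y 0 < n\<close> \<open>y 1 < n\<close> by metis
    moreover from this \<open>y 0 \<noteq> y 1\<close> have "i < j \<or> j < i" by (metis linorder_neqE_nat)
    ultimately show ?thesis using that[of i j] that[of j i] by (auto simp: insert_commute)
  qed
  define X where "X = x ` {Suc p..q}"
  have inverted: "linear_by n \<alpha> (Inv A X) (x \<circ> reflect_interval (Suc p) q)"
    unfolding X_def using linear_by_Inv_interval[OF x pq(2)] .
  have "clan n A X"
    unfolding X_def using linear_by_interval_clan[OF assms(4) x] pq by simp
  moreover have "clan n (Inv A X) ((x \<circ> reflect_interval (Suc p) q) ` {p..Suc p})"
    using linear_by_interval_clan[OF gen_tournament_Inv[OF assms(4)] inverted] pq by simp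
  moreover have "(x \<circ> reflect_interval (Suc p) q) ` {p..Suc p} = {y 0, y 1}"
    using pq by (auto simp: reflect_interval_def atLeastAtMostSuc_conv)
  moreover have "clan n B {y 0, y 1}"
    using linear_by_interval_clan[OF assms(5) y, of 1 0] assms(1) by (simp add: atLeastAtMostSuc_conv insert_commute)
  moreover have "\<not> trivial_clan n {y 0, y 1}"
    using card_two_not_trivial_clan \<open>y 0 \<noteq> y 1\<close> assms(1) by simp
  ultimately show ?thesis by metis
qed
end
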